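(* Let $\mathcal{D}\subset\mathbb{R}^d$ be compact, $0<a,b<\infty$, $c:=a+b$, and let $\mathcal{B}=\{\phi_j\}_{j=0}^\infty$ be an orthonormal (Schauder) basis of $\mathbf{L}^2(\mathcal{D})$. Let $m(n)$ be a sequence of positive integers such that $m(n)\to\infty$ as $n\to\infty$ and \[ \frac{1}{n}\sum_{j=0}^{m(n)-1}\int_{\mathcal{D}}\frac{|\phi_j(x)|^2}{p_X(x)}\,dx\to0\quad\text{as }n\to\infty. \] Then for every $f\in\mathcal{F}$ and every $p_Z\in\mathcal{P}_Z$, $\mathbb{E}\left[\|f-\hat f_{n,m(n)}\|^2\right]\to0$ as $n\to\infty$.
   Context: $\mathcal{F}$ is the set of all measurable functions $f:\mathcal{D}\to[-a,+a]$. $p_X$ is a probability density on $\mathcal{D}$ (absolutely continuous w.r.t. Lebesgue measure) whose support is $\mathcal{D}$. $\mathcal{P}_Z$ is the set of all probability distributions on $\mathbb{R}$ with mean zero and support contained in $[-b,+b]$. Given $n$, let $X_1,\dots,X_n$ be i.i.d. with density $p_X$, $Z_1,\dots,Z_n$ i.i.d. with distribution $p_Z$, and $T_1,\dots,T_n$ i.i.d. uniform on $[-c,+c]$, all mutually independent; $Y_i=f(X_i)+Z_i$, and $B_i=+1$ if $Y_i>T_i$, $B_i=-1$ otherwise. Inner product $\langle g,h\rangle=\int_{\mathcal{D}}g h^*\,dx$, $\|g\|^2=\langle g,g\rangle$. The estimator is $\hat\alpha_j:=\frac{c}{n}\sum_{i=1}^n\frac{\phi_j^*(X_i)}{p_X(X_i)}B_i$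 and $\hat f_{n,m}:=\sum_{j=0}^{m-1}\hat\alpha_j\phi_j$. The expectation is over the $X_i,Z_i,T_i$. *)

theory Defs
  imports "HOL-Probability.Probability"
begin

definition l2_sq :: "'a measure \<Rightarrow> ('a \<Rightarrow> complex) \<Rightarrow> ennreal" where
  "l2_sq M g = (\<integral>\<^sup>+ x. ennreal ((cmod (g x))\<^sup>2) \<partial>M)"

definition square_integrable :: "'a measure \<Rightarrow> ('a \<Rightarrow> complex) \<Rightarrow> bool" where
  "square_integrable M g \<longleftrightarrow> g \<in> borel_measurable M \<and> l2_sq M g < \<infinity>"

definition l2_inner :: "'a measure \<Rightarrow> ('a \<Rightarrow> complex) \<Rightarrow> ('a \<Rightarrow> complex) \<Rightarrow> complex" where
  "l2_inner M g h = (\<integral> x. g x * cnj (h x) \<partial>M)"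

definition orthonormal_basis_L2 :: "'a measure \<Rightarrow> (nat \<Rightarrow> 'a \<Rightarrow> complex) \<Rightarrow> bool" where
  "orthonormal_basis_L2 M \<phi> \<longleftrightarrow>
     (\<forall>j. square_integrable M (\<phi> j)) \<and>
     (\<forall>j k. l2_inner M (\<phi> j) (\<phi> k) = (if j = k then 1 else 0)) \<and>
     (\<forall>g. square_integrable M g \<longrightarrow>
        (\<exists>\<alpha>::nat \<Rightarrow> complex. (\<lambda>m. l2_sq M (\<lambda>x. g x - (\<Sum>j<m. \<alpha> j * \<phi> j x))) \<longlonglongrightarrow> 0))"

text \<open>Distribution of one sample (X_i, Z_i, T_i): X has density pX on D (w.r.t. Lebesgue measure),
  Z ~ pZ, T uniform on [-c,c], mutually independent.\<close>
definition sample_meas :: "'d::euclidean_space set \<Rightarrow> ('d \<Rightarrow> real) \<Rightarrow> real measure \<Rightarrow> real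
    \<Rightarrow> ('d \<times> real \<times> real) measure" where
  "sample_meas D pX pZ c =
     density (lebesgue_on D) (\<lambda>x. ennreal (pX x)) \<Otimes>\<^sub>M (pZ \<Otimes>\<^sub>M uniform_measure lborel {-c..c})"

definition samples_meas :: "nat \<Rightarrow> 'd::euclidean_space set \<Rightarrow> ('d \<Rightarrow> real) \<Rightarrow> real measure \<Rightarrow> real
    \<Rightarrow> (nat \<Rightarrow> 'd \<times> real \<times> real) measure" where
  "samples_meas n D pX pZ c = (\<Pi>\<^sub>M i\<in>{..<n}. sample_meas D pX pZ c)"

definition bit :: "('d \<Rightarrow> real) \<Rightarrow> 'd \<times> real \<times> real \<Rightarrow> real" where
  "bit f s = (if f (fst s) + fst (snd s) > snd (snd s) then 1 else -1)"

definition alpha_hat :: "real \<Rightarrow> nat \<Rightarrow> (nat \<Rightarrow> 'd \<Rightarrow> complex) \<Rightarrow> ('d \<Rightarrow> real) \<Rightarrow> ('d \<Rightarrow> real)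
    \<Rightarrow> (nat \<Rightarrow> 'd \<times> real \<times> real) \<Rightarrow> nat \<Rightarrow> complex" where
  "alpha_hat c n \<phi> pX f \<omega> j =
     complex_of_real (c / real n) *
       (\<Sum>i<n. cnj (\<phi> j (fst (\<omega> i))) / complex_of_real (pX (fst (\<omega> i))) * complex_of_real (bit f (\<omega> i)))"

definition f_hat :: "real \<Rightarrow> nat \<Rightarrow> nat \<Rightarrow> (nat \<Rightarrow> 'd \<Rightarrow> complex) \<Rightarrow> ('d \<Rightarrow> real) \<Rightarrow> ('d \<Rightarrow> real)
    \<Rightarrow> (nat \<Rightarrow> 'd \<times> real \<times> real) \<Rightarrow> 'd \<Rightarrow> complex" where
  "f_hat c n m \<phi> pX f \<omega> x = (\<Sum>j<m. alpha_hat c n \<phi> pX f \<omega> j * \<phi> j x)"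

end

theory Submission
  imports Defs
begin

text \<open>Dithering makes the one-bit observations unbiased: averaging
  \<open>B = sign (f X + Z - T)\<close> over the uniform threshold \<open>T\<close> gives \<open>(f X + Z) / c\<close>, and
  averaging over the mean-zero noise gives \<open>f X / c\<close>, so each summand
  \<open>c \<phi>\<^sub>j\<^sup>* (X) B / p\<^sub>X (X)\<close> of \<open>\<alpha>\<^sub>j\<close>-hat has expectation \<open>\<langle>f, \<phi>\<^sub>j\<rangle>\<close>. By orthonormality the
  mean-square error of \<open>f\<close>-hat then splits into the truncation error
  \<open>\<parallel>f\<parallel>\<^sup>2 - \<Sum>\<^sub>j\<^sub><\<^sub>m |\<langle>f, \<phi>\<^sub>j\<rangle>|\<^sup>2\<close>, which vanishes as \<open>m \<rightarrow> \<infinity>\<close> because \<open>\<phi>\<close> is a basis, and the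
  variances of the \<open>m\<close> estimated coefficients, which by independence of the samples
  add up to at most \<open>(c\<^sup>2 / n) \<Sum>\<^sub>j\<^sub><\<^sub>m \<integral> |\<phi>\<^sub>j|\<^sup>2 / p\<^sub>X\<close>.\<close>

lemma integrable_mult_cnj_iff:
  "integrable M (\<lambda>x. g x * cnj (g x)) \<longleftrightarrow> integrable M (\<lambda>x. (cmod (g x))\<^sup>2)"
  unfolding complex_norm_square[symmetric] by (rule complex_of_real_integrable_eq)

lemma integral_mult_cnj:
  "integral\<^sup>L M (\<lambda>x. g x * cnj (g x)) = of_real (integral\<^sup>L M (\<lambda>x. (cmod (g x))\<^sup>2))"
  unfolding complex_norm_square[symmetric] by (rule integral_complex_of_real)

lemma (in finite_measure) integrable_cmod_sq_imp_integrable: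
  fixes g :: "'a \<Rightarrow> complex"
  assumes [measurable]: "g \<in> borel_measurable M" and "integrable M (\<lambda>x. (cmod (g x))\<^sup>2)"
  shows "integrable M g"
proof -
  have "integrable M (\<lambda>x. cmod (g x))"
    by (rule square_integrable_imp_integrable) (use assms in auto)
  then show ?thesis by (simp add: integrable_norm_iff)
qed

lemma (in prob_space) integral_cmod_sq_centered:
  fixes h :: "'a \<Rightarrow> complex"
  assumes [measurable]: "h \<in> borel_measurable M" and h2: "integrable M (\<lambda>x. (cmod (h x))\<^sup>2)"
  defines "\<mu> \<equiv> expectation h"
  shows "integrable M (\<lambda>x. (cmod (h x - \<mu>))\<^sup>2)"
    and "integral\<^sup>L M (\<lambda>x. (cmod (h x - \<mu>))\<^sup>2) = integral\<^sup>L M (\<lambda>x. (cmod (h x))\<^sup>2) - (cmod \<mu>)\<^sup>2"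
proof -
  have h: "integrable M h" by (rule integrable_cmod_sq_imp_integrable) fact+
  have hh: "integrable M (\<lambda>x. h x * cnj (h x))" using h2 by (simp add: integrable_mult_cnj_iff)
  have expand: "(h x - \<mu>) * cnj (h x - \<mu>) = h x * cnj (h x) - cnj \<mu> * h x - \<mu> * cnj (h x) + \<mu> * cnj \<mu>" for x
    by (simp add: algebra_simps)
  have "integrable M (\<lambda>x. (h x - \<mu>) * cnj (h x - \<mu>))"
    unfolding expand using h hh by simp
  then show "integrable M (\<lambda>x. (cmod (h x - \<mu>))\<^sup>2)" unfolding integrable_mult_cnj_iff .
  have "complex_of_real (integral\<^sup>L M (\<lambda>x. (cmod (h x - \<mu>))\<^sup>2))
      = integral\<^sup>L M (\<lambda>x. h x * cnj (h x)) - cnj \<mu> * \<mu> - \<mu> * cnj \<mu> + \<mu> * cnj \<mu>"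
    unfolding integral_mult_cnj[symmetric] expand using h hh by (simp add: prob_space \<mu>_def)
  also have "\<dots> = complex_of_real (integral\<^sup>L M (\<lambda>x. (cmod (h x))\<^sup>2) - (cmod \<mu>)\<^sup>2)"
    using complex_norm_square[of \<mu>] by (simp add: integral_mult_cnj mult.commute)
  finally show "integral\<^sup>L M (\<lambda>x. (cmod (h x - \<mu>))\<^sup>2) = integral\<^sup>L M (\<lambda>x. (cmod (h x))\<^sup>2) - (cmod \<mu>)\<^sup>2"
    using of_real_eq_iff by blast
qed

lemma integral_PiM_component:
  fixes u :: "'a \<Rightarrow> 'b::{banach, second_countable_topology}"
  assumes "prob_space S" "i \<in> I" and u: "u \<in> borel_measurable S"
  shows "integrable (PiM I (\<lambda>_. S)) (\<lambda>\<omega>. u (\<omega> i)) \<longleftrightarrow> integrable S u"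
    and "integral\<^sup>L (PiM I (\<lambda>_. S)) (\<lambda>\<omega>. u (\<omega> i)) = integral\<^sup>L S u"
proof -
  have distr: "distr (PiM I (\<lambda>_. S)) S (\<lambda>\<omega>. \<omega> i) = S"
    using assms by (intro distr_PiM_component)
  have comp: "(\<lambda>\<omega>. \<omega> i) \<in> PiM I (\<lambda>_. S) \<rightarrow>\<^sub>M S"
    using \<open>i \<in> I\<close> by (rule measurable_component_singleton)
  show "integrable (PiM I (\<lambda>_. S)) (\<lambda>\<omega>. u (\<omega> i)) \<longleftrightarrow> integrable S u"
    using integrable_distr_eq[OF comp, of u] u by (simp add: distr)
  show "integral\<^sup>L (PiM I (\<lambda>_. S)) (\<lambda>\<omega>. u (\<omega> i)) = integral\<^sup>L S u"
    using integral_distr[OF comp, of u] u by (simp add: distr)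
qed

lemma integral_PiM_two_components:
  fixes u v :: "'a \<Rightarrow> 'b::{real_normed_field, banach, second_countable_topology}"
  assumes S: "prob_space S" and I: "finite I" "i \<in> I" "k \<in> I" "i \<noteq> k"
    and u: "integrable S u" and v: "integrable S v"
  shows "integrable (PiM I (\<lambda>_. S)) (\<lambda>\<omega>. u (\<omega> i) * v (\<omega> k))"
    and "integral\<^sup>L (PiM I (\<lambda>_. S)) (\<lambda>\<omega>. u (\<omega> i) * v (\<omega> k)) = integral\<^sup>L S u * integral\<^sup>L S v"
proof -
  interpret S: prob_space S by (fact S)
  interpret product_prob_space "\<lambda>_. S" I
    by (simp add: product_prob_space_def product_prob_space_axioms_def product_sigma_finite_def
        S prob_space_imp_sigma_finite)
  have prod_two: "(\<Prod>l\<in>I. if l = i then A else if l = k then B else 1) = A * B" for A B :: 'b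
    using I by (simp add: prod.If_cases Int_absorb1 Diff_eq[symmetric])
  define w where "w l = (if l = i then u else if l = k then v else (\<lambda>_. 1))" for l
  have w: "integrable S (w l)" for l
    using u v by (simp add: w_def)
  have prod_w: "(\<Prod>l\<in>I. w l (\<omega> l)) = u (\<omega> i) * v (\<omega> k)" for \<omega>
    by (subst prod_two[symmetric]) (auto simp: w_def intro: prod.cong)
  have "(\<Prod>l\<in>I. integral\<^sup>L S (w l)) = integral\<^sup>L S u * integral\<^sup>L S v"
    by (subst prod_two[symmetric]) (auto simp: w_def S.prob_space intro: prod.cong)
  then show "integral\<^sup>L (PiM I (\<lambda>_. S)) (\<lambda>\<omega>. u (\<omega> i) * v (\<omega> k)) = integral\<^sup>L S u * integral\<^sup>L S v"
    using product_integral_prod[of I w] I(1) w by (simp add: prod_w)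
  show "integrable (PiM I (\<lambda>_. S)) (\<lambda>\<omega>. u (\<omega> i) * v (\<omega> k))"
    using product_integrable_prod[of I w] I(1) w by (simp add: prod_w)
qed

lemma integral_PiM_cross_moment:
  fixes g :: "'a \<Rightarrow> complex"
  assumes S: "prob_space S" and [measurable]: "g \<in> borel_measurable S"
    and g2: "integrable S (\<lambda>s. (cmod (g s))\<^sup>2)" and g0: "integral\<^sup>L S g = 0"
    and I: "finite I" "i \<in> I" "k \<in> I"
  shows "integrable (PiM I (\<lambda>_. S)) (\<lambda>\<omega>. g (\<omega> i) * cnj (g (\<omega> k)))"
    and "integral\<^sup>L (PiM I (\<lambda>_. S)) (\<lambda>\<omega>. g (\<omega> i) * cnj (g (\<omega> k)))
           = (if i = k then of_real (integral\<^sup>L S (\<lambda>s. (cmod (g s))\<^sup>2)) else 0)"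
proof -
  interpret S: prob_space S by (fact S)
  have g: "integrable S g" using g2 by (rule S.integrable_cmod_sq_imp_integrable[rotated]) simp
  have gg: "integrable S (\<lambda>s. g s * cnj (g s))" using g2 by (simp add: integrable_mult_cnj_iff)
  have "integrable (PiM I (\<lambda>_. S)) (\<lambda>\<omega>. g (\<omega> i) * cnj (g (\<omega> k))) \<and>
    integral\<^sup>L (PiM I (\<lambda>_. S)) (\<lambda>\<omega>. g (\<omega> i) * cnj (g (\<omega> k)))
           = (if i = k then of_real (integral\<^sup>L S (\<lambda>s. (cmod (g s))\<^sup>2)) else 0)"
  proof (cases "i = k")
    case True
    then show ?thesis
      using integral_PiM_component[OF S I(2), of "\<lambda>s. g s * cnj (g s)"] gg
      by (simp add: integral_mult_cnj)
  next
    case False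
    then show ?thesis
      using integral_PiM_two_components[OF S I False g, of "\<lambda>s. cnj (g s)"] g g0 by simp
  qed
  then show "integrable (PiM I (\<lambda>_. S)) (\<lambda>\<omega>. g (\<omega> i) * cnj (g (\<omega> k)))"
    and "integral\<^sup>L (PiM I (\<lambda>_. S)) (\<lambda>\<omega>. g (\<omega> i) * cnj (g (\<omega> k)))
           = (if i = k then of_real (integral\<^sup>L S (\<lambda>s. (cmod (g s))\<^sup>2)) else 0)"
    by auto
qed

lemma nn_integral_cmod_sq_sum_iid:
  fixes g :: "'a \<Rightarrow> complex"
  assumes S: "prob_space S" and gm: "g \<in> borel_measurable S"
    and g2: "integrable S (\<lambda>s. (cmod (g s))\<^sup>2)" and g0: "integral\<^sup>L S g = 0"
  shows "(\<integral>\<^sup>+\<omega>. (cmod (\<Sum>i<n. g (\<omega> i)))\<^sup>2 \<partial>PiM {..<n} (\<lambda>_. S))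
          = ennreal (real n * integral\<^sup>L S (\<lambda>s. (cmod (g s))\<^sup>2))"
proof -
  let ?P = "PiM {..<n} (\<lambda>_. S)"
  let ?G = "\<lambda>i k \<omega>. g (\<omega> i) * cnj (g (\<omega> k))"
  note cross = integral_PiM_cross_moment[OF S gm g2 g0 finite_lessThan]
  have square: "(\<Sum>i<n. g (\<omega> i)) * cnj (\<Sum>i<n. g (\<omega> i)) = (\<Sum>i<n. \<Sum>k<n. ?G i k \<omega>)" for \<omega>
    by (simp add: sum_product)
  have int_inner: "integrable ?P (\<lambda>\<omega>. \<Sum>k<n. ?G i k \<omega>)" if "i < n" for i
    using cross(1) that by (intro Bochner_Integration.integrable_sum) simp
  have "integrable ?P (\<lambda>\<omega>. \<Sum>i<n. \<Sum>k<n. ?G i k \<omega>)"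
    by (rule Bochner_Integration.integrable_sum) (simp add: int_inner)
  then have int: "integrable ?P (\<lambda>\<omega>. (cmod (\<Sum>i<n. g (\<omega> i)))\<^sup>2)"
    unfolding integrable_mult_cnj_iff[symmetric] square .
  have "complex_of_real (integral\<^sup>L ?P (\<lambda>\<omega>. (cmod (\<Sum>i<n. g (\<omega> i)))\<^sup>2))
      = (\<Sum>i<n. integral\<^sup>L ?P (\<lambda>\<omega>. \<Sum>k<n. ?G i k \<omega>))"
    unfolding integral_mult_cnj[symmetric] square
    by (rule Bochner_Integration.integral_sum) (simp add: int_inner)
  also have "\<dots> = (\<Sum>i<n. \<Sum>k<n. integral\<^sup>L ?P (?G i k))"
    using cross(1) by (intro sum.cong refl Bochner_Integration.integral_sum) simp
  also have "\<dots> = complex_of_real (real n * integral\<^sup>L S (\<lambda>s. (cmod (g s))\<^sup>2))"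
    using cross(2) by simp
  finally have "integral\<^sup>L ?P (\<lambda>\<omega>. (cmod (\<Sum>i<n. g (\<omega> i)))\<^sup>2) = real n * integral\<^sup>L S (\<lambda>s. (cmod (g s))\<^sup>2)"
    using of_real_eq_iff by blast
  with nn_integral_eq_integral[OF int] show ?thesis by simp
qed

lemma (in prob_space) integrable_pair_fst:
  fixes G :: "'b \<Rightarrow> 'c::{banach, second_countable_topology}"
  assumes "integrable N G"
  shows "integrable (N \<Otimes>\<^sub>M M) (\<lambda>s. G (fst s))"
proof -
  have "integrable (distr (N \<Otimes>\<^sub>M M) N fst) G"
    using assms by (simp add: distr_pair_fst)
  then show ?thesis
    using assms by (subst (asm) integrable_distr_eq) auto
qed

lemma (in prob_space) nn_integral_pair_fst:
  assumes "G \<in> borel_measurable N"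
  shows "(\<integral>\<^sup>+s. G (fst s) \<partial>(N \<Otimes>\<^sub>M M)) = (\<integral>\<^sup>+x. G x \<partial>N)"
  using nn_integral_distr[of fst "N \<Otimes>\<^sub>M M" N G] assms by (simp add: distr_pair_fst)

lemma borel_measurable_cnj [measurable]: "cnj \<in> borel_measurable borel"
  by (intro borel_measurable_continuous_onI continuous_intros)

lemma square_integrable_imp_integrable_cmod_sq:
  "square_integrable M g \<Longrightarrow> integrable M (\<lambda>x. (cmod (g x))\<^sup>2)"
  unfolding square_integrable_def l2_sq_def integrable_iff_bounded by (auto; measurable)

lemma square_integrable_imp_integrable_mult_cnj:
  assumes g: "square_integrable M g" and h: "square_integrable M h"
  shows "integrable M (\<lambda>x. g x * cnj (h x))"
proof (rule Bochner_Integration.integrable_bound)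
  show "integrable M (\<lambda>x. (cmod (g x))\<^sup>2 + (cmod (h x))\<^sup>2)"
    using g h by (simp add: square_integrable_imp_integrable_cmod_sq)
  have [measurable]: "g \<in> borel_measurable M" "h \<in> borel_measurable M"
    using g h by (auto simp: square_integrable_def)
  show "(\<lambda>x. g x * cnj (h x)) \<in> borel_measurable M"
    by measurable
  show "AE x in M. norm (g x * cnj (h x)) \<le> norm ((cmod (g x))\<^sup>2 + (cmod (h x))\<^sup>2)"
  proof (rule AE_I2)
    fix x
    have "cmod (g x) * cmod (h x) \<le> (cmod (g x))\<^sup>2 + (cmod (h x))\<^sup>2"
      using sum_squares_bound[of "cmod (g x)" "cmod (h x)"]
        mult_nonneg_nonneg[OF norm_ge_zero norm_ge_zero, of "g x" "h x"] by linarith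
    then show "norm (g x * cnj (h x)) \<le> norm ((cmod (g x))\<^sup>2 + (cmod (h x))\<^sup>2)"
      by (simp add: norm_mult)
  qed
qed

lemma l2_inner_commute: "l2_inner M h g = cnj (l2_inner M g h)"
  unfolding l2_inner_def Bochner_Integration.integral_cnj[symmetric] by (simp add: mult.commute)

lemma integral_mult_cnj_diff_partial_sum:
  fixes u :: "'a \<Rightarrow> complex" and \<phi> :: "nat \<Rightarrow> 'a \<Rightarrow> complex" and \<gamma> :: "nat \<Rightarrow> complex" and K :: nat
  assumes \<phi>: "\<And>j. square_integrable M (\<phi> j)" and u: "square_integrable M u"
  defines "w \<equiv> \<lambda>x. u x - (\<Sum>j<K. \<gamma> j * \<phi> j x)"
  shows "integrable M (\<lambda>x. w x * cnj (w x))"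
    and "integral\<^sup>L M (\<lambda>x. w x * cnj (w x)) = l2_inner M u u
           - (\<Sum>j<K. cnj (\<gamma> j) * l2_inner M u (\<phi> j)) - (\<Sum>j<K. \<gamma> j * l2_inner M (\<phi> j) u)
           + (\<Sum>j<K. \<Sum>l<K. \<gamma> j * cnj (\<gamma> l) * l2_inner M (\<phi> j) (\<phi> l))"
proof -
  have expand: "w x * cnj (w x) = u x * cnj (u x)
      - (\<Sum>j<K. cnj (\<gamma> j) * (u x * cnj (\<phi> j x))) - (\<Sum>j<K. \<gamma> j * (\<phi> j x * cnj (u x)))
      + (\<Sum>j<K. \<Sum>l<K. \<gamma> j * cnj (\<gamma> l) * (\<phi> j x * cnj (\<phi> l x)))" for x
    unfolding w_def by (simp add: algebra_simps sum_distrib_left sum_distrib_right sum_product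
        sum_subtractf[symmetric]) (rule sum.swap)
  have [simp]: "integrable M (\<lambda>x. u x * cnj (u x))" "integrable M (\<lambda>x. u x * cnj (\<phi> j x))"
    "integrable M (\<lambda>x. \<phi> j x * cnj (u x))" "integrable M (\<lambda>x. \<phi> j x * cnj (\<phi> l x))" for j l
    using u \<phi> by (simp_all add: square_integrable_imp_integrable_mult_cnj)
  show "integrable M (\<lambda>x. w x * cnj (w x))"
    unfolding expand by simp
  show "integral\<^sup>L M (\<lambda>x. w x * cnj (w x)) = l2_inner M u u
           - (\<Sum>j<K. cnj (\<gamma> j) * l2_inner M u (\<phi> j)) - (\<Sum>j<K. \<gamma> j * l2_inner M (\<phi> j) u)
           + (\<Sum>j<K. \<Sum>l<K. \<gamma> j * cnj (\<gamma> l) * l2_inner M (\<phi> j) (\<phi> l))"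
    unfolding expand l2_inner_def by (simp add: Bochner_Integration.integral_sum)
qed

lemma integral_cmod_sq_diff_partial_sum:
  fixes u :: "'a \<Rightarrow> complex" and \<phi> :: "nat \<Rightarrow> 'a \<Rightarrow> complex" and \<gamma> :: "nat \<Rightarrow> complex" and K :: nat
  assumes \<phi>: "\<And>j. square_integrable M (\<phi> j)"
    and orth: "\<And>j l. l2_inner M (\<phi> j) (\<phi> l) = (if j = l then 1 else 0)"
    and u: "square_integrable M u"
  shows "integrable M (\<lambda>x. (cmod (u x - (\<Sum>j<K. \<gamma> j * \<phi> j x)))\<^sup>2)"
    and "integral\<^sup>L M (\<lambda>x. (cmod (u x - (\<Sum>j<K. \<gamma> j * \<phi> j x)))\<^sup>2)
           = integral\<^sup>L M (\<lambda>x. (cmod (u x))\<^sup>2) - (\<Sum>j<K. (cmod (l2_inner M u (\<phi> j)))\<^sup>2)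
             + (\<Sum>j<K. (cmod (\<gamma> j - l2_inner M u (\<phi> j)))\<^sup>2)"
proof -
  note expansion = integral_mult_cnj_diff_partial_sum[OF \<phi> u, where K = K and \<gamma> = \<gamma>]
  show "integrable M (\<lambda>x. (cmod (u x - (\<Sum>j<K. \<gamma> j * \<phi> j x)))\<^sup>2)"
    using expansion(1) by (simp only: integrable_mult_cnj_iff)
  define \<alpha> where "\<alpha> j = l2_inner M u (\<phi> j)" for j
  have cross_terms: "- cnj (\<gamma> j) * \<alpha> j - \<gamma> j * cnj (\<alpha> j) + \<gamma> j * cnj (\<gamma> j)
      = of_real ((cmod (\<gamma> j - \<alpha> j))\<^sup>2) - of_real ((cmod (\<alpha> j))\<^sup>2)" for j
    unfolding complex_norm_square by (simp add: algebra_simps)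
  have "complex_of_real (integral\<^sup>L M (\<lambda>x. (cmod (u x - (\<Sum>j<K. \<gamma> j * \<phi> j x)))\<^sup>2))
      = l2_inner M u u + (\<Sum>j<K. - cnj (\<gamma> j) * \<alpha> j - \<gamma> j * cnj (\<alpha> j) + \<gamma> j * cnj (\<gamma> j))"
    unfolding integral_mult_cnj[symmetric] expansion(2)
    by (simp add: l2_inner_commute[of M "\<phi> _" u] orth \<alpha>_def sum.distrib sum_subtractf
        sum_negf if_distrib cong: if_cong)
  also have "\<dots> = complex_of_real (integral\<^sup>L M (\<lambda>x. (cmod (u x))\<^sup>2)
      - (\<Sum>j<K. (cmod (\<alpha> j))\<^sup>2) + (\<Sum>j<K. (cmod (\<gamma> j - \<alpha> j))\<^sup>2))"
    unfolding cross_terms l2_inner_def integral_mult_cnj by (simp add: sum_subtractf)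
  finally show "integral\<^sup>L M (\<lambda>x. (cmod (u x - (\<Sum>j<K. \<gamma> j * \<phi> j x)))\<^sup>2)
           = integral\<^sup>L M (\<lambda>x. (cmod (u x))\<^sup>2) - (\<Sum>j<K. (cmod (l2_inner M u (\<phi> j)))\<^sup>2)
             + (\<Sum>j<K. (cmod (\<gamma> j - l2_inner M u (\<phi> j)))\<^sup>2)"
    unfolding \<alpha>_def of_real_eq_iff .
qed

lemma abs_bit [simp]: "\<bar>bit f s\<bar> = 1"
  by (simp add: bit_def)

lemma integral_uniform_measure_sign:
  fixes c y :: real
  assumes c: "0 < c" and y: "\<bar>y\<bar> \<le> c"
  shows "(\<integral>t. (if y > t then 1 else -1) \<partial>uniform_measure lborel {-c..c}) = y / c"
proof -
  let ?U = "uniform_measure lborel {-c..c}"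
  have emeasure: "emeasure lborel {-c..c} = ennreal (2 * c)" using c by simp
  interpret U: prob_space ?U
    by (rule prob_space_uniform_measure) (use emeasure c in auto)
  have sign: "(\<lambda>t. if y > t then 1 else -1) = (\<lambda>t. 2 * indicator {..<y} t - (1::real))"
    by (auto simp: fun_eq_iff indicator_def)
  have "measure ?U {..<y} = measure lborel ({-c..c} \<inter> {..<y}) / measure lborel {-c..c}"
    by (rule measure_uniform_measure) (use emeasure c in auto)
  also have "{-c..c} \<inter> {..<y} = {-c..<y}" using y by auto
  finally have "measure ?U {..<y} = (y + c) / (2 * c)" using y c by simp
  moreover have "integrable ?U (indicator {..<y} :: real \<Rightarrow> real)"
    by (rule U.integrable_const_bound[where B = 1]) (auto simp: indicator_def)
  ultimately show ?thesis
    unfolding sign using c U.prob_space by (simp add: field_simps)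
qed

context
  fixes D :: "'d::euclidean_space set" and a b c :: real and \<phi> :: "nat \<Rightarrow> 'd \<Rightarrow> complex"
    and pX :: "'d \<Rightarrow> real" and f :: "'d \<Rightarrow> real" and pZ :: "real measure"
  assumes D_compact: "compact D"
    and a_pos: "0 < a" and b_pos: "0 < b" and c_def: "c = a + b"
    and basis: "orthonormal_basis_L2 (lebesgue_on D) \<phi>"
    and pX_meas [measurable]: "pX \<in> borel_measurable (lebesgue_on D)"
    and pX_pos: "\<forall>x\<in>D. 0 < pX x"
    and pX_prob: "(\<integral>\<^sup>+ x. ennreal (pX x) \<partial>lebesgue_on D) = 1"
    and f_meas [measurable]: "f \<in> borel_measurable (lebesgue_on D)"
    and f_bounded: "\<forall>x\<in>D. f x \<in> {-a..a}"
    and pZ_prob: "prob_space pZ" and pZ_sets [measurable_cong]: "sets pZ = sets borel"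
    and pZ_bounded: "AE z in pZ. z \<in> {-b..b}" and pZ_mean: "(\<integral> z. z \<partial>pZ) = 0"
begin

abbreviation X_law :: "'d measure" where
  "X_law \<equiv> density (lebesgue_on D) (\<lambda>x. ennreal (pX x))"

abbreviation T_law :: "real measure" where
  "T_law \<equiv> uniform_measure lborel {-c..c}"

abbreviation ZT_law :: "(real \<times> real) measure" where
  "ZT_law \<equiv> pZ \<Otimes>\<^sub>M T_law"

lemma phi_square_integrable: "square_integrable (lebesgue_on D) (\<phi> j)"
  using basis by (simp add: orthonormal_basis_L2_def)

lemma phi_measurable [measurable]: "\<phi> j \<in> borel_measurable (lebesgue_on D)"
  using phi_square_integrable by (simp add: square_integrable_def)

lemma phi_orthonormal: "l2_inner (lebesgue_on D) (\<phi> j) (\<phi> k) = (if j = k then 1 else 0)"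
  using basis by (simp add: orthonormal_basis_L2_def)

lemma c_pos: "0 < c"
  using a_pos b_pos c_def by simp

lemma finite_measure_lebesgue_on_D: "finite_measure (lebesgue_on D)"
  by (rule finite_measure_lebesgue_on[OF lmeasurable_compact[OF D_compact]])

lemma prob_space_X_law: "prob_space X_law"
proof
  have "emeasure X_law (space X_law) = (\<integral>\<^sup>+ x. ennreal (pX x) * indicator D x \<partial>lebesgue_on D)"
    by (subst emeasure_density) auto
  also have "\<dots> = (\<integral>\<^sup>+ x. ennreal (pX x) \<partial>lebesgue_on D)"
    by (intro nn_integral_cong) (auto simp: indicator_def)
  finally show "emeasure X_law (space X_law) = 1" using pX_prob by simp
qed

lemma prob_space_T_law: "prob_space T_law"
  by (rule prob_space_uniform_measure) (use c_pos in auto)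

lemma prob_space_ZT_law: "prob_space ZT_law"
  by (rule prob_space_pair[OF pZ_prob prob_space_T_law])

lemma prob_space_sample_meas: "prob_space (sample_meas D pX pZ c)"
  unfolding sample_meas_def by (rule prob_space_pair[OF prob_space_X_law prob_space_ZT_law])

lemma prob_space_samples_meas: "prob_space (samples_meas n D pX pZ c)"
  unfolding samples_meas_def by (intro prob_space_PiM prob_space_sample_meas)

lemma integral_bit_ZT_law:
  assumes x: "x \<in> D"
  shows "(\<integral>q. bit f (x, q) \<partial>ZT_law) = f x / c"
proof -
  interpret Z: prob_space pZ by (rule pZ_prob)
  interpret T: prob_space T_law by (rule prob_space_T_law)
  interpret ZT: pair_prob_space pZ T_law ..
  have bit_meas: "(\<lambda>q. bit f (x, q)) \<in> borel_measurable ZT_law"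
    unfolding bit_def fst_conv snd_conv by measurable
  have "integrable ZT_law (\<lambda>q. bit f (x, q))"
    by (rule ZT.integrable_const_bound[where B = 1]) (auto simp: bit_def bit_meas)
  then have "(\<integral>q. bit f (x, q) \<partial>ZT_law) = (\<integral>z. (\<integral>t. bit f (x, z, t) \<partial>T_law) \<partial>pZ)"
    by (rule ZT.integral_fst'[symmetric])
  also have "\<dots> = (\<integral>z. (f x + z) / c \<partial>pZ)"
  proof (rule integral_cong_AE)
    show "(\<lambda>z. \<integral>t. bit f (x, z, t) \<partial>T_law) \<in> borel_measurable pZ"
      using bit_meas by (intro T.borel_measurable_lebesgue_integral) simp
    show "AE z in pZ. (\<integral>t. bit f (x, z, t) \<partial>T_law) = (f x + z) / c"
      using pZ_bounded
    proof eventually_elim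
      case (elim z)
      then have "\<bar>f x + z\<bar> \<le> c" using f_bounded x c_def by auto
      with integral_uniform_measure_sign[OF c_pos] show ?case by (simp add: bit_def)
    qed
  qed simp
  also have "\<dots> = (f x + (\<integral>z. z \<partial>pZ)) / c"
  proof -
    have "integrable pZ (\<lambda>z. z)"
      by (rule Z.integrable_const_bound[where B = b]) (use pZ_bounded in auto)
    then show ?thesis using Z.prob_space by simp
  qed
  also have "\<dots> = f x / c" using pZ_mean by simp
  finally show ?thesis .
qed

definition fourier_coeff :: "nat \<Rightarrow> complex" where
  "fourier_coeff j = l2_inner (lebesgue_on D) (\<lambda>x. of_real (f x)) (\<phi> j)"

definition phi_energy :: "nat \<Rightarrow> ennreal" where
  "phi_energy j = (\<integral>\<^sup>+ x. ennreal ((cmod (\<phi> j x))\<^sup>2) / ennreal (pX x) \<partial>lebesgue_on D)"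

definition coeff_term :: "nat \<Rightarrow> 'd \<times> real \<times> real \<Rightarrow> complex" where
  "coeff_term j s = of_real c * (cnj (\<phi> j (fst s)) / of_real (pX (fst s)) * of_real (bit f s))"

lemma coeff_term_measurable [measurable]: "coeff_term j \<in> borel_measurable (sample_meas D pX pZ c)"
  unfolding coeff_term_def sample_meas_def bit_def by measurable

lemma alpha_hat_minus_fourier_coeff:
  assumes "0 < n"
  shows "alpha_hat c n \<phi> pX f \<omega> j - fourier_coeff j
    = of_real (1 / real n) * (\<Sum>i<n. coeff_term j (\<omega> i) - fourier_coeff j)"
  using assms unfolding alpha_hat_def coeff_term_def
  by (simp add: sum_subtractf sum_distrib_left right_diff_distrib mult_ac)

lemma integrable_X_law_cnj_phi_div_pX: "integrable X_law (\<lambda>x. cnj (\<phi> j x) / of_real (pX x))"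
proof -
  interpret finite_measure "lebesgue_on D" by (rule finite_measure_lebesgue_on_D)
  have "integrable (lebesgue_on D) (\<phi> j)"
    using phi_square_integrable
    by (intro integrable_cmod_sq_imp_integrable square_integrable_imp_integrable_cmod_sq) auto
  moreover have "integrable (lebesgue_on D) (\<lambda>x. pX x *\<^sub>R (cnj (\<phi> j x) / of_real (pX x)))
      \<longleftrightarrow> integrable (lebesgue_on D) (\<lambda>x. cnj (\<phi> j x))"
    by (rule Bochner_Integration.integrable_cong[OF refl]) (use pX_pos in \<open>auto simp: scaleR_conv_of_real\<close>)
  ultimately have "integrable (lebesgue_on D) (\<lambda>x. pX x *\<^sub>R (cnj (\<phi> j x) / of_real (pX x)))"
    by simp
  then show ?thesis
    by (subst integrable_density) (use pX_pos in \<open>auto simp: less_imp_le\<close>)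
qed

lemma coeff_term_unbiased:
  "integrable (sample_meas D pX pZ c) (coeff_term j)"
  "integral\<^sup>L (sample_meas D pX pZ c) (coeff_term j) = fourier_coeff j"
proof -
  interpret X: prob_space X_law by (rule prob_space_X_law)
  interpret ZT: prob_space ZT_law by (rule prob_space_ZT_law)
  interpret XZT: pair_prob_space X_law ZT_law ..
  let ?F = "\<lambda>x. cnj (\<phi> j x) / of_real (pX x)"
  show int: "integrable (sample_meas D pX pZ c) (coeff_term j)"
    unfolding sample_meas_def
  proof (rule Bochner_Integration.integrable_bound)
    show "integrable (X_law \<Otimes>\<^sub>M ZT_law) (\<lambda>s. of_real c * ?F (fst s))"
      by (intro Bochner_Integration.integrable_mult_right ZT.integrable_pair_fst
          integrable_X_law_cnj_phi_div_pX)
    show "AE s in X_law \<Otimes>\<^sub>M ZT_law. norm (coeff_term j s) \<le> norm (of_real c * ?F (fst s))"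
      by (rule AE_I2) (simp add: coeff_term_def norm_mult norm_divide)
  qed (use coeff_term_measurable in \<open>simp add: sample_meas_def\<close>)
  have inner: "(\<integral>q. coeff_term j (x, q) \<partial>ZT_law) = ?F x * of_real (f x)" if x: "x \<in> D" for x
  proof -
    have "(\<integral>q. coeff_term j (x, q) \<partial>ZT_law) = of_real c * ?F x * of_real (\<integral>q. bit f (x, q) \<partial>ZT_law)"
      unfolding coeff_term_def by (simp add: mult.assoc)
    also have "\<dots> = ?F x * of_real (f x)"
      using c_pos by (simp add: integral_bit_ZT_law[OF x] field_simps)
    finally show ?thesis .
  qed
  have "integral\<^sup>L (sample_meas D pX pZ c) (coeff_term j) = (\<integral>x. (\<integral>q. coeff_term j (x, q) \<partial>ZT_law) \<partial>X_law)"
    using int unfolding sample_meas_def by (rule XZT.integral_fst'[symmetric])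
  also have "\<dots> = (\<integral>x. ?F x * of_real (f x) \<partial>X_law)"
    by (intro Bochner_Integration.integral_cong refl) (simp add: inner)
  also have "\<dots> = (\<integral>x. pX x *\<^sub>R (?F x * of_real (f x)) \<partial>lebesgue_on D)"
    by (rule integral_density) (use pX_pos in \<open>auto simp: less_imp_le\<close>)
  also have "\<dots> = fourier_coeff j"
    unfolding fourier_coeff_def l2_inner_def
    by (intro Bochner_Integration.integral_cong refl) (use pX_pos in \<open>auto simp: scaleR_conv_of_real field_simps\<close>)
  finally show "integral\<^sup>L (sample_meas D pX pZ c) (coeff_term j) = fourier_coeff j" .
qed

lemma nn_integral_cmod_sq_coeff_term:
  "(\<integral>\<^sup>+s. (cmod (coeff_term j s))\<^sup>2 \<partial>sample_meas D pX pZ c) = ennreal (c\<^sup>2) * phi_energy j"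
proof -
  interpret ZT: prob_space ZT_law by (rule prob_space_ZT_law)
  have "(\<integral>\<^sup>+s. (cmod (coeff_term j s))\<^sup>2 \<partial>sample_meas D pX pZ c)
      = (\<integral>\<^sup>+s. ennreal (c\<^sup>2 * (cmod (\<phi> j (fst s)))\<^sup>2 / (pX (fst s))\<^sup>2) \<partial>(X_law \<Otimes>\<^sub>M ZT_law))"
    unfolding sample_meas_def coeff_term_def
    by (simp add: norm_mult norm_divide power_mult_distrib power_divide)
  also have "\<dots> = (\<integral>\<^sup>+x. ennreal (c\<^sup>2 * (cmod (\<phi> j x))\<^sup>2 / (pX x)\<^sup>2) \<partial>X_law)"
    by (rule ZT.nn_integral_pair_fst) measurable
  also have "\<dots> = (\<integral>\<^sup>+x. ennreal (pX x) * ennreal (c\<^sup>2 * (cmod (\<phi> j x))\<^sup>2 / (pX x)\<^sup>2) \<partial>lebesgue_on D)"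
    by (rule nn_integral_density) auto
  also have "\<dots> = (\<integral>\<^sup>+x. ennreal (c\<^sup>2) * (ennreal ((cmod (\<phi> j x))\<^sup>2) / ennreal (pX x)) \<partial>lebesgue_on D)"
  proof (rule nn_integral_cong)
    fix x assume "x \<in> space (lebesgue_on D)"
    then have p: "0 < pX x" using pX_pos by simp
    then have "pX x * (c\<^sup>2 * (cmod (\<phi> j x))\<^sup>2 / (pX x)\<^sup>2) = c\<^sup>2 * ((cmod (\<phi> j x))\<^sup>2 / pX x)"
      by (simp add: power2_eq_square field_simps)
    with p show "ennreal (pX x) * ennreal (c\<^sup>2 * (cmod (\<phi> j x))\<^sup>2 / (pX x)\<^sup>2)
        = ennreal (c\<^sup>2) * (ennreal ((cmod (\<phi> j x))\<^sup>2) / ennreal (pX x))"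
      by (simp add: ennreal_mult[symmetric] divide_ennreal)
  qed
  also have "\<dots> = ennreal (c\<^sup>2) * phi_energy j"
    unfolding phi_energy_def by (rule nn_integral_cmult) measurable
  finally show ?thesis .
qed

lemma nn_integral_cmod_sq_alpha_hat_error_le:
  assumes n: "0 < n"
  shows "(\<integral>\<^sup>+\<omega>. (cmod (alpha_hat c n \<phi> pX f \<omega> j - fourier_coeff j))\<^sup>2 \<partial>samples_meas n D pX pZ c)
     \<le> ennreal (c\<^sup>2) * (ennreal (1 / real n) * phi_energy j)"
proof (cases "phi_energy j = \<infinity>")
  case True
  then show ?thesis using n c_pos by (simp add: ennreal_mult_top)
next
  case False
  let ?S = "sample_meas D pX pZ c"
  let ?h = "coeff_term j"
  interpret S: prob_space ?S by (rule prob_space_sample_meas)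
  have "(\<integral>\<^sup>+s. (cmod (?h s))\<^sup>2 \<partial>?S) < \<infinity>"
    using False c_pos by (simp add: nn_integral_cmod_sq_coeff_term less_top ennreal_mult_less_top)
  then have h2: "integrable ?S (\<lambda>s. (cmod (?h s))\<^sup>2)"
    by (simp add: integrable_iff_bounded)
  have second_moment: "ennreal (integral\<^sup>L ?S (\<lambda>s. (cmod (?h s))\<^sup>2)) = ennreal (c\<^sup>2) * phi_energy j"
    using nn_integral_eq_integral[OF h2] nn_integral_cmod_sq_coeff_term by simp
  note centered = S.integral_cmod_sq_centered[OF coeff_term_measurable h2,
      unfolded coeff_term_unbiased(2)]
  let ?V = "integral\<^sup>L ?S (\<lambda>s. (cmod (?h s - fourier_coeff j))\<^sup>2)"
  have V_nonneg: "0 \<le> ?V" by simp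
  have "(\<integral>\<^sup>+\<omega>. (cmod (alpha_hat c n \<phi> pX f \<omega> j - fourier_coeff j))\<^sup>2 \<partial>samples_meas n D pX pZ c)
     = (\<integral>\<^sup>+\<omega>. ennreal ((1 / real n)\<^sup>2) * (cmod (\<Sum>i<n. ?h (\<omega> i) - fourier_coeff j))\<^sup>2
          \<partial>samples_meas n D pX pZ c)"
  proof (rule nn_integral_cong)
    fix \<omega>
    have "(cmod (of_real (1 / real n) * (\<Sum>i<n. ?h (\<omega> i) - fourier_coeff j)))\<^sup>2
        = (1 / real n)\<^sup>2 * (cmod (\<Sum>i<n. ?h (\<omega> i) - fourier_coeff j))\<^sup>2"
      by (simp only: norm_mult norm_of_real power_mult_distrib power2_abs)
    then show "ennreal ((cmod (alpha_hat c n \<phi> pX f \<omega> j - fourier_coeff j))\<^sup>2)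
        = ennreal ((1 / real n)\<^sup>2) * (cmod (\<Sum>i<n. ?h (\<omega> i) - fourier_coeff j))\<^sup>2"
      unfolding alpha_hat_minus_fourier_coeff[OF n] by (simp add: ennreal_mult)
  qed
  also have "\<dots> = ennreal ((1 / real n)\<^sup>2) * ennreal (real n * ?V)"
  proof -
    have "(\<integral>\<^sup>+\<omega>. (cmod (\<Sum>i<n. ?h (\<omega> i) - fourier_coeff j))\<^sup>2 \<partial>samples_meas n D pX pZ c)
        = ennreal (real n * ?V)"
      unfolding samples_meas_def
      by (rule nn_integral_cmod_sq_sum_iid[OF prob_space_sample_meas])
        (use coeff_term_unbiased centered(1) in \<open>simp_all add: S.prob_space\<close>)
    moreover have "(\<lambda>\<omega>. ennreal ((cmod (\<Sum>i<n. ?h (\<omega> i) - fourier_coeff j))\<^sup>2))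
        \<in> borel_measurable (samples_meas n D pX pZ c)"
      unfolding samples_meas_def by measurable
    ultimately show ?thesis by (simp add: nn_integral_cmult)
  qed
  also have "\<dots> = ennreal (1 / real n * ?V)"
    using n V_nonneg by (simp add: ennreal_mult[symmetric] power2_eq_square)
  also have "\<dots> \<le> ennreal (1 / real n * integral\<^sup>L ?S (\<lambda>s. (cmod (?h s))\<^sup>2))"
    using centered(2) by (intro ennreal_leI mult_left_mono) auto
  also have "\<dots> = ennreal (1 / real n) * ennreal (integral\<^sup>L ?S (\<lambda>s. (cmod (?h s))\<^sup>2))"
    by (rule ennreal_mult) auto
  also have "\<dots> = ennreal (c\<^sup>2) * (ennreal (1 / real n) * phi_energy j)"
    unfolding second_moment by (simp add: mult_ac)
  finally show ?thesis .
qed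

lemma f_square_integrable: "square_integrable (lebesgue_on D) (\<lambda>x. of_real (f x))"
proof -
  interpret finite_measure "lebesgue_on D" by (rule finite_measure_lebesgue_on_D)
  have "(\<integral>\<^sup>+ x. (cmod (of_real (f x)))\<^sup>2 \<partial>lebesgue_on D) \<le> (\<integral>\<^sup>+ x. ennreal (a\<^sup>2) \<partial>lebesgue_on D)"
  proof (rule nn_integral_mono)
    fix x assume "x \<in> space (lebesgue_on D)"
    then have "\<bar>f x\<bar> \<le> a" using f_bounded by auto
    then show "ennreal ((cmod (of_real (f x)))\<^sup>2) \<le> ennreal (a\<^sup>2)"
      using power_mono[of "\<bar>f x\<bar>" a 2] by (simp add: ennreal_leI)
  qed
  also have "\<dots> < \<infinity>" by (simp add: less_top[symmetric] ennreal_mult_eq_top_iff)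
  finally show ?thesis unfolding square_integrable_def l2_sq_def by simp
qed

definition bessel_tail :: "nat \<Rightarrow> real" where
  "bessel_tail K = (\<integral>x. (f x)\<^sup>2 \<partial>lebesgue_on D) - (\<Sum>j<K. (cmod (fourier_coeff j))\<^sup>2)"

lemma integral_cmod_sq_f_minus_partial_sum:
  shows "integrable (lebesgue_on D) (\<lambda>x. (cmod (of_real (f x) - (\<Sum>j<K. \<gamma> j * \<phi> j x)))\<^sup>2)"
    and "(\<integral>x. (cmod (of_real (f x) - (\<Sum>j<K. \<gamma> j * \<phi> j x)))\<^sup>2 \<partial>lebesgue_on D)
           = bessel_tail K + (\<Sum>j<K. (cmod (\<gamma> j - fourier_coeff j))\<^sup>2)"
  using integral_cmod_sq_diff_partial_sum[OF phi_square_integrable phi_orthonormal f_square_integrable,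
      where K = K and \<gamma> = \<gamma>]
  by (simp_all add: bessel_tail_def fourier_coeff_def)

lemma bessel_tail_nonneg: "0 \<le> bessel_tail K"
proof -
  have "0 \<le> (\<integral>x. (cmod (of_real (f x) - (\<Sum>j<K. fourier_coeff j * \<phi> j x)))\<^sup>2 \<partial>lebesgue_on D)"
    by simp
  then show ?thesis by (simp add: integral_cmod_sq_f_minus_partial_sum(2))
qed

lemma l2_sq_f_minus_partial_sum:
  "l2_sq (lebesgue_on D) (\<lambda>x. of_real (f x) - (\<Sum>j<K. \<gamma> j * \<phi> j x))
     = ennreal (bessel_tail K) + (\<Sum>j<K. ennreal ((cmod (\<gamma> j - fourier_coeff j))\<^sup>2))"
  unfolding l2_sq_def
  using nn_integral_eq_integral[OF integral_cmod_sq_f_minus_partial_sum(1)]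
  by (simp add: integral_cmod_sq_f_minus_partial_sum(2) bessel_tail_nonneg sum_nonneg)

lemma bessel_tail_tendsto_zero: "(\<lambda>K. ennreal (bessel_tail K)) \<longlonglongrightarrow> 0"
proof -
  obtain \<gamma> where \<gamma>: "(\<lambda>K. l2_sq (lebesgue_on D) (\<lambda>x. of_real (f x) - (\<Sum>j<K. \<gamma> j * \<phi> j x))) \<longlonglongrightarrow> 0"
    using basis f_square_integrable unfolding orthonormal_basis_L2_def by blast
  show ?thesis
  proof (rule tendsto_sandwich[OF _ _ tendsto_const \<gamma>])
    show "\<forall>\<^sub>F K in sequentially. ennreal (bessel_tail K)
        \<le> l2_sq (lebesgue_on D) (\<lambda>x. of_real (f x) - (\<Sum>j<K. \<gamma> j * \<phi> j x))"
      by (simp add: l2_sq_f_minus_partial_sum)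
  qed simp
qed

lemma nn_integral_l2_sq_f_minus_f_hat_le:
  assumes n: "0 < n"
  shows "(\<integral>\<^sup>+\<omega>. l2_sq (lebesgue_on D) (\<lambda>x. of_real (f x) - f_hat c n K \<phi> pX f \<omega> x) \<partial>samples_meas n D pX pZ c)
    \<le> ennreal (bessel_tail K) + ennreal (c\<^sup>2) * (ennreal (1 / real n) * (\<Sum>j<K. phi_energy j))"
proof -
  let ?P = "samples_meas n D pX pZ c"
  let ?err = "\<lambda>j \<omega>. ennreal ((cmod (alpha_hat c n \<phi> pX f \<omega> j - fourier_coeff j))\<^sup>2)"
  interpret P: prob_space ?P by (rule prob_space_samples_meas)
  have err_meas: "?err j \<in> borel_measurable ?P" for j
    unfolding alpha_hat_minus_fourier_coeff[OF n] samples_meas_def by measurable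
  have "(\<integral>\<^sup>+\<omega>. l2_sq (lebesgue_on D) (\<lambda>x. of_real (f x) - f_hat c n K \<phi> pX f \<omega> x) \<partial>?P)
      = (\<integral>\<^sup>+\<omega>. ennreal (bessel_tail K) + (\<Sum>j<K. ?err j \<omega>) \<partial>?P)"
    unfolding f_hat_def l2_sq_f_minus_partial_sum ..
  also have "\<dots> = ennreal (bessel_tail K) + (\<Sum>j<K. \<integral>\<^sup>+\<omega>. ?err j \<omega> \<partial>?P)"
    using err_meas by (simp add: nn_integral_add nn_integral_sum P.emeasure_space_1 del: sum_ennreal)
  also have "\<dots> \<le> ennreal (bessel_tail K) + (\<Sum>j<K. ennreal (c\<^sup>2) * (ennreal (1 / real n) * phi_energy j))"
    by (intro add_left_mono sum_mono nn_integral_cmod_sq_alpha_hat_error_le[OF n])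
  also have "\<dots> = ennreal (bessel_tail K) + ennreal (c\<^sup>2) * (ennreal (1 / real n) * (\<Sum>j<K. phi_energy j))"
    by (simp add: sum_distrib_left)
  finally show ?thesis .
qed

lemma mse_f_hat_tendsto_zero:
  fixes m :: "nat \<Rightarrow> nat"
  assumes m_lim: "filterlim m at_top sequentially"
    and m_cond: "(\<lambda>n. ennreal (1 / real n) *
                    (\<Sum>j<m n. \<integral>\<^sup>+ x. ennreal ((cmod (\<phi> j x))\<^sup>2) / ennreal (pX x) \<partial>lebesgue_on D))
                  \<longlonglongrightarrow> 0"
  shows "(\<lambda>n. \<integral>\<^sup>+\<omega>. l2_sq (lebesgue_on D) (\<lambda>x. of_real (f x) - f_hat c n (m n) \<phi> pX f \<omega> x)
                 \<partial>samples_meas n D pX pZ c) \<longlonglongrightarrow> 0"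
proof (rule tendsto_sandwich[OF _ _ tendsto_const])
  let ?B = "\<lambda>n. ennreal (bessel_tail (m n)) + ennreal (c\<^sup>2) * (ennreal (1 / real n) * (\<Sum>j<m n. phi_energy j))"
  show "\<forall>\<^sub>F n in sequentially. (\<integral>\<^sup>+\<omega>. l2_sq (lebesgue_on D) (\<lambda>x. of_real (f x) - f_hat c n (m n) \<phi> pX f \<omega> x)
      \<partial>samples_meas n D pX pZ c) \<le> ?B n"
    using eventually_gt_at_top[of 0] by eventually_elim (rule nn_integral_l2_sq_f_minus_f_hat_le)
  have "(\<lambda>n. ennreal (bessel_tail (m n))) \<longlonglongrightarrow> 0"
    using filterlim_compose[OF bessel_tail_tendsto_zero m_lim] by simp
  moreover have "(\<lambda>n. ennreal (c\<^sup>2) * (ennreal (1 / real n) * (\<Sum>j<m n. phi_energy j))) \<longlonglongrightarrow> ennreal (c\<^sup>2) * 0"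
    using m_cond unfolding phi_energy_def[symmetric] by (intro ennreal_tendsto_cmult) simp_all
  ultimately show "?B \<longlonglongrightarrow> 0"
    using tendsto_add by fastforce
qed simp

end

theorem corollary1:
  fixes D :: "'d::euclidean_space set"
    and a b c :: real
    and \<phi> :: "nat \<Rightarrow> 'd \<Rightarrow> complex"
    and pX :: "'d \<Rightarrow> real"
    and m :: "nat \<Rightarrow> nat"
  assumes D_compact: "compact D"
    and a_pos: "0 < a" and b_pos: "0 < b" and c_def: "c = a + b"
    and basis: "orthonormal_basis_L2 (lebesgue_on D) \<phi>"
    and pX_meas: "pX \<in> borel_measurable (lebesgue_on D)"
    and pX_pos: "\<forall>x\<in>D. 0 < pX x"
    and pX_prob: "(\<integral>\<^sup>+ x. ennreal (pX x) \<partial>lebesgue_on D) = 1"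
    and m_pos: "\<forall>n. 0 < m n"
    and m_lim: "filterlim m at_top sequentially"
    and m_cond: "(\<lambda>n. ennreal (1 / real n) *
                    (\<Sum>j<m n. \<integral>\<^sup>+ x. ennreal ((cmod (\<phi> j x))\<^sup>2) / ennreal (pX x) \<partial>lebesgue_on D))
                  \<longlonglongrightarrow> 0"
  shows "\<forall>f pZ. (f \<in> borel_measurable (lebesgue_on D) \<and> (\<forall>x\<in>D. f x \<in> {-a..a})) \<longrightarrow>
           (prob_space pZ \<and> sets pZ = sets borel \<and> (AE z in pZ. z \<in> {-b..b}) \<and>
              (\<integral> z. z \<partial>pZ) = 0) \<longrightarrow>
           (\<lambda>n. \<integral>\<^sup>+ \<omega>. l2_sq (lebesgue_on D)
                    (\<lambda>x. complex_of_real (f x) - f_hat c n (m n) \<phi> pX f \<omega> x)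
                 \<partial>samples_meas n D pX pZ c) \<longlonglongrightarrow> 0"
  using mse_f_hat_tendsto_zero[OF D_compact a_pos b_pos c_def basis pX_meas pX_pos pX_prob
      _ _ _ _ _ _ m_lim m_cond]
  by blast

end
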